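(* Let $G$ be a simple graph on six vertices with degree sequence $d_1\leq d_2\leq\cdots\leq d_6$, where $d_1=d_2=2$ and $d_3\geq 3$. Then $G$ is Hamiltonian unless one of the following holds: (a) the two vertices of degree $2$ are nonadjacent and have the same pair of neighbors; or (b) $G$ is isomorphic to the graph $J$ obtained from a triangle and a complete graph $K_4$ by identifying one vertex of the triangle with one vertex of the $K_4$.
   Context: The degree sequence of a graph on $n$ vertices is the nondecreasing sequence $d_1\leq\cdots\leq d_n$ of its vertex degrees. A graph is Hamiltonian if it has a cycle through all of its vertices. *)

theory Defs
  imports Main "HOL-Library.Multiset"
begin

definition simple_graph :: "'a set \<Rightarrow> ('a \<Rightarrow> 'a \<Rightarrow> bool) \<Rightarrow> bool" where
  "simple_graph V E \<longleftrightarrow> finite V \<and> (\<forall>u v. E u v \<longrightarrow> E v u) \<and> (\<forall>v. \<not> E v v)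
     \<and> (\<forall>u v. E u v \<longrightarrow> u \<in> V \<and> v \<in> V)"

definition neighbors :: "'a set \<Rightarrow> ('a \<Rightarrow> 'a \<Rightarrow> bool) \<Rightarrow> 'a \<Rightarrow> 'a set" where
  "neighbors V E v = {u \<in> V. E v u}"

definition degree :: "'a set \<Rightarrow> ('a \<Rightarrow> 'a \<Rightarrow> bool) \<Rightarrow> 'a \<Rightarrow> nat" where
  "degree V E v = card (neighbors V E v)"

text \<open>Degree sequence: the nondecreasing list of vertex degrees (index 0 = d_1).\<close>
definition degree_sequence :: "'a set \<Rightarrow> ('a \<Rightarrow> 'a \<Rightarrow> bool) \<Rightarrow> nat list" where
  "degree_sequence V E = sorted_list_of_multiset (image_mset (degree V E) (mset_set V))"

definition hamiltonian :: "'a set \<Rightarrow> ('a \<Rightarrow> 'a \<Rightarrow> bool) \<Rightarrow> bool" where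
  "hamiltonian V E \<longleftrightarrow> (\<exists>vs. distinct vs \<and> set vs = V \<and> length vs \<ge> 3
      \<and> (\<forall>i < length vs - 1. E (vs ! i) (vs ! Suc i))
      \<and> E (last vs) (hd vs))"

definition graph_iso :: "'a set \<Rightarrow> ('a \<Rightarrow> 'a \<Rightarrow> bool) \<Rightarrow> 'b set \<Rightarrow> ('b \<Rightarrow> 'b \<Rightarrow> bool) \<Rightarrow> bool" where
  "graph_iso V E W F \<longleftrightarrow> (\<exists>f. bij_betw f V W \<and> (\<forall>u\<in>V. \<forall>v\<in>V. E u v \<longleftrightarrow> F (f u) (f v)))"

definition J_verts :: "nat set" where "J_verts = {0..5}"

definition J_edge :: "nat \<Rightarrow> nat \<Rightarrow> bool" where
  "J_edge u v \<longleftrightarrow> u \<noteq> v \<and> ((u \<in> {0,1,2} \<and> v \<in> {0,1,2}) \<or> (u \<in> {2,3,4,5} \<and> v \<in> {2,3,4,5}))"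

end

(* Let x and y be the vertices of degree 2. Every other vertex v has degree at least 3, so among the
   five vertices other than v it misses at most two; if v is adjacent to neither x nor y, it is adjacent
   to all three remaining vertices. Splitting on whether x and y are adjacent and on how their
   neighbourhoods meet, these forced edges close a Hamiltonian cycle through x and y, except in two
   situations: x and y adjacent with a common neighbour p, which forces a K4 on p and the three
   remaining vertices (the graph J); and x and y nonadjacent with the same two neighbours. *)

theory Submission
  imports Defs
begin

lemma simple_graph_finite: "simple_graph V E \<Longrightarrow> finite V"
  and simple_graph_edge_sym: "simple_graph V E \<Longrightarrow> E u v \<Longrightarrow> E v u"
  and simple_graph_edge_commute: "simple_graph V E \<Longrightarrow> E u v \<longleftrightarrow> E v u"
  and simple_graph_irrefl: "simple_graph V E \<Longrightarrow> \<not> E v v"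
  and simple_graph_edge_in_V: "simple_graph V E \<Longrightarrow> E u v \<Longrightarrow> u \<in> V \<and> v \<in> V"
  unfolding simple_graph_def by blast+

lemma in_neighbors_iff: "simple_graph V E \<Longrightarrow> u \<in> neighbors V E v \<longleftrightarrow> E v u"
  unfolding neighbors_def by (auto dest: simple_graph_edge_in_V)

lemma neighbors_eq_pairD:
  assumes "simple_graph V E" "neighbors V E v = {a, b}"
  shows "E v u \<longleftrightarrow> u \<in> {a, b}" "E u v \<longleftrightarrow> u \<in> {a, b}"
  using in_neighbors_iff[OF assms(1), of _ v] assms(2) simple_graph_edge_commute[OF assms(1)]
  by auto

lemma sorted_two_twos:
  fixes s :: "nat list"
  assumes "sorted s" "2 < length s" "s ! 0 = 2" "s ! 1 = 2" "3 \<le> s ! 2"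
  shows "count (mset s) 2 = 2" "\<forall>n \<in> set s. n = 2 \<or> 3 \<le> n"
proof -
  obtain a b c rest where s: "s = a # b # c # rest"
    using assms(2) by (auto simp: Suc_le_length_iff Suc_le_eq[symmetric] numeral_eq_Suc)
  have "\<forall>n \<in> set rest. 3 \<le> n"
    using assms(1,5) unfolding s by auto
  then show "count (mset s) 2 = 2" "\<forall>n \<in> set s. n = 2 \<or> 3 \<le> n"
    using assms(3-5) unfolding s by (auto simp: count_eq_zero_iff)
qed

lemma degree_sequence_two_twos:
  assumes "finite V" "2 < card V"
    and "degree_sequence V E ! 0 = 2" "degree_sequence V E ! 1 = 2" "3 \<le> degree_sequence V E ! 2"
  obtains x y where "x \<in> V" "y \<in> V" "x \<noteq> y" "degree V E x = 2" "degree V E y = 2"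
    "\<forall>v \<in> V - {x, y}. 3 \<le> degree V E v"
proof -
  define s where "s = degree_sequence V E"
  have mset_s: "mset s = image_mset (degree V E) (mset_set V)"
    unfolding s_def degree_sequence_def by simp
  have "sorted s" "length s = card V"
    unfolding s_def degree_sequence_def by (simp_all flip: size_mset)
  then have twos: "count (mset s) 2 = 2" "\<forall>n \<in> set s. n = 2 \<or> 3 \<le> n"
    using sorted_two_twos[of s] assms(2-5) unfolding s_def by auto
  have "card {v \<in> V. degree V E v = 2} = size {# n \<in># mset s. n = 2 #}"
    unfolding mset_s using assms(1) by (simp add: filter_mset_image_mset)
  also have "\<dots> = 2"
    using twos(1) by (simp add: filter_eq_replicate_mset)
  finally obtain x y where xy: "{v \<in> V. degree V E v = 2} = {x, y}" "x \<noteq> y"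
    unfolding card_2_iff by blast
  have "degree V E v \<in> set s" if "v \<in> V" for v
    using that assms(1) by (simp flip: set_mset_mset add: mset_s)
  then have "\<forall>v \<in> V - {x, y}. 3 \<le> degree V E v"
    using twos(2) xy(1) by blast
  then show ?thesis
    using that xy by blast
qed

lemma nonadjacent_notin_neighbors:
  assumes "simple_graph V E" "\<not> E x y"
  shows "x \<notin> neighbors V E x \<union> neighbors V E y" "y \<notin> neighbors V E x \<union> neighbors V E y"
  using assms in_neighbors_iff[OF assms(1)] simple_graph_irrefl[OF assms(1)]
    simple_graph_edge_commute[OF assms(1)] by auto

lemma degree_two_neighbors:
  assumes "degree V E v = 2"
  obtains p q where "p \<noteq> q" "neighbors V E v = {p, q}"
  using assms unfolding degree_def card_2_iff by blast

lemma degree_ge_3_avoids_two: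
  assumes "simple_graph V E" "3 \<le> degree V E v"
  shows "\<exists>u. E v u \<and> u \<noteq> s \<and> u \<noteq> t"
proof (rule ccontr)
  assume "\<not> ?thesis"
  then have "neighbors V E v \<subseteq> {s, t}"
    using in_neighbors_iff[OF assms(1)] by auto
  then have "degree V E v \<le> card {s, t}"
    unfolding degree_def by (simp add: card_mono)
  also have "\<dots> \<le> 2"
    by (simp add: card_insert_if)
  finally show False
    using assms(2) by simp
qed

lemma neighbor_in_remaining_four:
  assumes "simple_graph V E" "V = {v, z, w, a, b, c}" "\<not> E v z" "E v u"
  shows "u \<in> {w, a, b, c}"
proof -
  have "u \<in> V" "u \<noteq> v" "u \<noteq> z"
    using assms simple_graph_edge_in_V simple_graph_irrefl by metis+
  then show ?thesis
    using assms(2) by simp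
qed

lemma adjacent_two_of_three:
  assumes "simple_graph V E" "3 \<le> degree V E v" "V = {v, z, w, a, b, c}" "\<not> E v z"
  shows "(E v a \<or> E v b) \<and> (E v a \<or> E v c) \<and> (E v b \<or> E v c)"
proof -
  have "E v s \<or> E v t" if "{w, a, b, c} = {w, r, s, t}" for r s t
  proof -
    obtain u where "E v u" "u \<noteq> w" "u \<noteq> r"
      using degree_ge_3_avoids_two[OF assms(1,2)] by blast
    then show ?thesis
      using neighbor_in_remaining_four[OF assms(1,3,4)] that by auto
  qed
  from this[of a b c] this[of b a c] this[of c a b] show ?thesis
    by (auto simp: insert_commute)
qed

lemma adjacent_all_three:
  assumes "simple_graph V E" "3 \<le> degree V E v" "V = {v, z, w, a, b, c}" "\<not> E v z" "\<not> E v w"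
  shows "E v a \<and> E v b \<and> E v c"
proof -
  have "E v r" if "{a, b, c} = {r, s, t}" for r s t
  proof -
    obtain u where "E v u" "u \<noteq> s" "u \<noteq> t"
      using degree_ge_3_avoids_two[OF assms(1,2)] by blast
    then show ?thesis
      using neighbor_in_remaining_four[OF assms(1,3,4)] assms(5) that by auto
  qed
  from this[of a b c] this[of b a c] this[of c a b] show ?thesis
    by (auto simp: insert_commute)
qed

lemma card_2_obtain_other:
  assumes "card A = 2" "c \<in> A"
  obtains a where "a \<noteq> c" "A = {c, a}"
proof -
  obtain p q where "A = {p, q}" "p \<noteq> q"
    using assms(1) unfolding card_2_iff by blast
  then show ?thesis
    using that assms(2) by (metis insert_commute insertE singletonD)
qed

lemma extend_distinct_to_enumeration:
  assumes "finite V" "distinct xs" "set xs \<subseteq> V"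
  obtains ys where "length ys = card V - length xs" "distinct (xs @ ys)" "set (xs @ ys) = V"
proof -
  obtain ys where "set ys = V - set xs" "distinct ys"
    using finite_distinct_list assms(1) by blast
  then have "distinct (xs @ ys)" "set (xs @ ys) = V"
    using assms(2,3) by auto
  moreover have "length ys = card V - length xs"
    using distinct_card[OF \<open>distinct (xs @ ys)\<close>] \<open>set (xs @ ys) = V\<close> by auto
  ultimately show ?thesis
    using that by blast
qed

lemma hamiltonian_six_cycle:
  assumes "distinct [a1, a2, a3, a4, a5, a6]" "V = {a1, a2, a3, a4, a5, a6}"
    and "E a1 a2" "E a2 a3" "E a3 a4" "E a4 a5" "E a5 a6" "E a6 a1"
  shows "hamiltonian V E"
  unfolding hamiltonian_def
proof (intro exI[of _ "[a1, a2, a3, a4, a5, a6]"] conjI allI impI)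
  fix i assume "i < length [a1, a2, a3, a4, a5, a6] - 1"
  then have "i \<in> {0, 1, 2, 3, 4}" by auto
  then show "E ([a1, a2, a3, a4, a5, a6] ! i) ([a1, a2, a3, a4, a5, a6] ! Suc i)"
    using assms(3-7) by (auto simp: numeral_eq_Suc)
qed (use assms(1,2,8) in auto)

lemma graph_iso_enumeration:
  assumes "distinct vs" "set vs = V"
    and "\<forall>i < length vs. \<forall>j < length vs. E (vs ! i) (vs ! j) \<longleftrightarrow> F i j"
  shows "graph_iso V E {..<length vs} F"
proof -
  have bij: "bij_betw ((!) vs) {..<length vs} V"
    using bij_betw_nth assms(1,2) by blast
  let ?f = "inv_into {..<length vs} ((!) vs)"
  have "bij_betw ?f V {..<length vs}"
    using bij by (rule bij_betw_inv_into)
  moreover have "E u v \<longleftrightarrow> F (?f u) (?f v)" if "u \<in> V" "v \<in> V" for u v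
  proof -
    have "?f u < length vs" "?f v < length vs"
      using bij_betw_apply[OF \<open>bij_betw ?f V _\<close>] that by auto
    moreover have "vs ! ?f u = u" "vs ! ?f v = v"
      using bij_betw_inv_into_right[OF bij] that by auto
    ultimately show ?thesis
      using assms(3) by metis
  qed
  ultimately show ?thesis
    unfolding graph_iso_def by blast
qed

context
  fixes V :: "'a set" and E :: "'a \<Rightarrow> 'a \<Rightarrow> bool" and x y :: 'a
  assumes graph: "simple_graph V E"
    and six: "card V = 6"
    and high_degree: "\<forall>v \<in> V - {x, y}. 3 \<le> degree V E v"
begin

lemma enumerate_vertices:
  assumes "distinct xs" "set xs \<subseteq> V"
  obtains ys where "length ys = 6 - length xs" "distinct (xs @ ys)" "V = set (xs @ ys)"
  using extend_distinct_to_enumeration[OF simple_graph_finite[OF graph] assms] six by metis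

lemma graph_iso_J_if_common_neighbor:
  assumes dist: "distinct [x, y, p, b, c, d]" and V: "V = {x, y, p, b, c, d}"
    and Nx: "neighbors V E x = {y, p}" and Ny: "neighbors V E y = {x, p}"
  shows "graph_iso V E J_verts J_edge"
proof -
  note Ex = neighbors_eq_pairD[OF graph Nx] and Ey = neighbors_eq_pairD[OF graph Ny]
  have "E b p \<and> E b c \<and> E b d"
    by (rule adjacent_all_three[OF graph, of b x y]) (use high_degree dist V Ex Ey in auto)
  moreover have "E c p \<and> E c b \<and> E c d"
    by (rule adjacent_all_three[OF graph, of c x y]) (use high_degree dist V Ex Ey in auto)
  moreover have "E d p \<and> E d b \<and> E d c"
    by (rule adjacent_all_three[OF graph, of d x y]) (use high_degree dist V Ex Ey in auto)
  ultimately have "\<forall>i < 6. \<forall>j < 6. E ([x, y, p, b, c, d] ! i) ([x, y, p, b, c, d] ! j) \<longleftrightarrow> J_edge i j"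
    using dist Ex Ey simple_graph_edge_sym[OF graph] simple_graph_irrefl[OF graph]
    unfolding J_edge_def by (auto simp: less_Suc_eq numeral_eq_Suc)
  moreover have "J_verts = {..<length [x, y, p, b, c, d]}"
    unfolding J_verts_def by auto
  ultimately show ?thesis
    using graph_iso_enumeration[of "[x, y, p, b, c, d]" V E J_edge] dist V by simp
qed

lemma hamiltonian_if_adjacent_distinct_neighbors:
  assumes dist: "distinct [x, y, p, q, r, s]" and V: "V = {x, y, p, q, r, s}"
    and Nx: "neighbors V E x = {y, p}" and Ny: "neighbors V E y = {x, q}"
  shows "hamiltonian V E"
proof -
  note Ex = neighbors_eq_pairD[OF graph Nx] and Ey = neighbors_eq_pairD[OF graph Ny]
  have "E r p \<and> E r q \<and> E r s"
    by (rule adjacent_all_three[OF graph, of r x y]) (use high_degree dist V Ex Ey in auto)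
  moreover have "E s p \<and> E s q \<and> E s r"
    by (rule adjacent_all_three[OF graph, of s x y]) (use high_degree dist V Ex Ey in auto)
  ultimately show ?thesis
    by (intro hamiltonian_six_cycle[of x y q r s p])
      (use dist V in \<open>auto simp: Ex Ey simple_graph_edge_commute[OF graph]\<close>)
qed

lemma hamiltonian_if_one_common_neighbor:
  assumes dist: "distinct [x, y, a, b, c, d]" and V: "V = {x, y, a, b, c, d}"
    and Nx: "neighbors V E x = {c, a}" and Ny: "neighbors V E y = {c, b}"
  shows "hamiltonian V E"
proof -
  note Ex = neighbors_eq_pairD[OF graph Nx] and Ey = neighbors_eq_pairD[OF graph Ny]
  have "E d a \<and> E d b \<and> E d c"
    by (rule adjacent_all_three[OF graph, of d x y]) (use high_degree dist V Ex Ey in auto)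
  then show ?thesis
    by (intro hamiltonian_six_cycle[of x a d b y c])
      (use dist V in \<open>auto simp: Ex Ey simple_graph_edge_commute[OF graph]\<close>)
qed

lemma hamiltonian_if_disjoint_neighbors:
  assumes dist: "distinct [x, y, a, b, c, d]" and sub: "set [x, y, a, b, c, d] \<subseteq> V"
    and Nx: "neighbors V E x = {a, b}" and Ny: "neighbors V E y = {c, d}"
  shows "hamiltonian V E"
proof -
  obtain ys where "length ys = 6 - length [x, y, a, b, c, d]" "V = set ([x, y, a, b, c, d] @ ys)"
    using enumerate_vertices[OF dist sub] by blast
  then have V: "V = {x, y, a, b, c, d}"
    by simp
  note Ex = neighbors_eq_pairD[OF graph Nx] and Ey = neighbors_eq_pairD[OF graph Ny]
  have "(E a b \<or> E a c) \<and> (E a b \<or> E a d) \<and> (E a c \<or> E a d)"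
    by (rule adjacent_two_of_three[OF graph, of a y x]) (use high_degree dist V Ey in auto)
  moreover have "(E b a \<or> E b c) \<and> (E b a \<or> E b d) \<and> (E b c \<or> E b d)"
    by (rule adjacent_two_of_three[OF graph, of b y x]) (use high_degree dist V Ey in auto)
  moreover have "(E c a \<or> E c b) \<and> (E c a \<or> E c d) \<and> (E c b \<or> E c d)"
    by (rule adjacent_two_of_three[OF graph, of c x y]) (use high_degree dist V Ex in auto)
  moreover have "(E d a \<or> E d b) \<and> (E d a \<or> E d c) \<and> (E d b \<or> E d c)"
    by (rule adjacent_two_of_three[OF graph, of d x y]) (use high_degree dist V Ex in auto)
  \<comment> \<open>each of a, b, c, d sees two of the other three, which forces a perfect matching
      between {a, b} and {c, d}\<close>
  ultimately have "(E a c \<and> E b d) \<or> (E a d \<and> E b c)"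
    using simple_graph_edge_sym[OF graph] by blast
  then show ?thesis
  proof
    assume "E a c \<and> E b d"
    then show ?thesis
      by (intro hamiltonian_six_cycle[of x a c y d b])
        (use dist V in \<open>auto simp: Ex Ey simple_graph_edge_commute[OF graph]\<close>)
  next
    assume "E a d \<and> E b c"
    then show ?thesis
      by (intro hamiltonian_six_cycle[of x a d y c b])
        (use dist V in \<open>auto simp: Ex Ey simple_graph_edge_commute[OF graph]\<close>)
  qed
qed

lemma hamiltonian_or_J_if_adjacent:
  assumes "E x y" "degree V E x = 2" "degree V E y = 2"
  shows "hamiltonian V E \<or> graph_iso V E J_verts J_edge"
proof -
  obtain p where Nx: "p \<noteq> y" "neighbors V E x = {y, p}"
    using card_2_obtain_other assms(1,2) in_neighbors_iff[OF graph] unfolding degree_def by metis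
  obtain q where Ny: "q \<noteq> x" "neighbors V E y = {x, q}"
    using card_2_obtain_other assms(1,3) in_neighbors_iff[OF graph] simple_graph_edge_commute[OF graph]
    unfolding degree_def by metis
  have "E x p" "E y q"
    using neighbors_eq_pairD(1)[OF graph] Nx Ny by blast+
  then have "x \<noteq> y" "x \<noteq> p" "y \<noteq> q" "{x, y, p, q} \<subseteq> V"
    using assms(1) simple_graph_irrefl[OF graph] simple_graph_edge_in_V[OF graph] by auto
  show ?thesis
  proof (cases "p = q")
    case True
    have "distinct [x, y, p]" "set [x, y, p] \<subseteq> V"
      using Nx(1) True \<open>x \<noteq> y\<close> \<open>x \<noteq> p\<close> \<open>{x, y, p, q} \<subseteq> V\<close> by auto
    then obtain ys where "length ys = 6 - length [x, y, p]" "distinct ([x, y, p] @ ys)" "V = set ([x, y, p] @ ys)"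
      by (rule enumerate_vertices)
    moreover from this(1) obtain b c d where "ys = [b, c, d]"
      by (auto simp: length_Suc_conv numeral_eq_Suc)
    ultimately show ?thesis
      using graph_iso_J_if_common_neighbor[of p b c d] Nx Ny True by simp
  next
    case False
    have "distinct [x, y, p, q]" "set [x, y, p, q] \<subseteq> V"
      using Nx(1) Ny(1) False \<open>x \<noteq> y\<close> \<open>x \<noteq> p\<close> \<open>y \<noteq> q\<close> \<open>{x, y, p, q} \<subseteq> V\<close> by auto
    then obtain ys where "length ys = 6 - length [x, y, p, q]" "distinct ([x, y, p, q] @ ys)" "V = set ([x, y, p, q] @ ys)"
      by (rule enumerate_vertices)
    moreover from this(1) obtain r s where "ys = [r, s]"
      by (auto simp: length_Suc_conv numeral_eq_Suc)
    ultimately show ?thesis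
      using hamiltonian_if_adjacent_distinct_neighbors[of p q r s] Nx Ny by simp
  qed
qed

lemma hamiltonian_or_same_neighbors_if_nonadjacent:
  assumes "x \<in> V" "y \<in> V" "x \<noteq> y" "\<not> E x y" "degree V E x = 2" "degree V E y = 2"
  shows "hamiltonian V E \<or> neighbors V E x = neighbors V E y"
proof -
  note outside = nonadjacent_notin_neighbors[OF graph assms(4)]
  show ?thesis
  proof (cases "neighbors V E x \<inter> neighbors V E y = {}")
    case True
    obtain a b where Nx: "a \<noteq> b" "neighbors V E x = {a, b}"
      using degree_two_neighbors assms(5) by metis
    obtain c d where Ny: "c \<noteq> d" "neighbors V E y = {c, d}"
      using degree_two_neighbors assms(6) by metis
    have "distinct [x, y, a, b, c, d]" "set [x, y, a, b, c, d] \<subseteq> V"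
      using Nx Ny True assms(1-3) outside unfolding neighbors_def by auto
    then show ?thesis
      using hamiltonian_if_disjoint_neighbors Nx Ny by blast
  next
    case False
    then obtain c where c: "c \<in> neighbors V E x" "c \<in> neighbors V E y"
      by blast
    obtain a where Nx: "a \<noteq> c" "neighbors V E x = {c, a}"
      using card_2_obtain_other assms(5) c(1) unfolding degree_def by metis
    obtain b where Ny: "b \<noteq> c" "neighbors V E y = {c, b}"
      using card_2_obtain_other assms(6) c(2) unfolding degree_def by metis
    show ?thesis
    proof (cases "a = b")
      case True
      then show ?thesis
        using Nx Ny by simp
    next
      case False
      have "distinct [x, y, a, b, c]" "set [x, y, a, b, c] \<subseteq> V"
        using Nx Ny False assms(1-3) outside unfolding neighbors_def by auto
      then obtain ys where "length ys = 6 - length [x, y, a, b, c]" "distinct ([x, y, a, b, c] @ ys)" "V = set ([x, y, a, b, c] @ ys)"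
        by (rule enumerate_vertices)
      moreover from this(1) obtain d where "ys = [d]"
        by (auto simp: length_Suc_conv)
      ultimately show ?thesis
        using hamiltonian_if_one_common_neighbor[of a b c d] Nx Ny by simp
    qed
  qed
qed

end

theorem lemma4p3:
  fixes V :: "'a set" and E :: "'a \<Rightarrow> 'a \<Rightarrow> bool"
  assumes "simple_graph V E"
    and "card V = 6"
    and "degree_sequence V E ! 0 = 2"
    and "degree_sequence V E ! 1 = 2"
    and "degree_sequence V E ! 2 \<ge> 3"
  shows "hamiltonian V E
    \<or> (\<exists>x\<in>V. \<exists>y\<in>V. x \<noteq> y \<and> degree V E x = 2 \<and> degree V E y = 2 \<and> \<not> E x y
         \<and> neighbors V E x = neighbors V E y)
    \<or> graph_iso V E J_verts J_edge"
proof -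
  obtain x y where xy: "x \<in> V" "y \<in> V" "x \<noteq> y" "degree V E x = 2" "degree V E y = 2"
    and high_degree: "\<forall>v \<in> V - {x, y}. 3 \<le> degree V E v"
    using degree_sequence_two_twos[OF simple_graph_finite[OF assms(1)]] assms(2-5) by auto
  show ?thesis
  proof (cases "E x y")
    case True
    then show ?thesis
      using hamiltonian_or_J_if_adjacent[OF assms(1,2) high_degree True xy(4,5)] by blast
  next
    case False
    then show ?thesis
      using hamiltonian_or_same_neighbors_if_nonadjacent[OF assms(1,2) high_degree xy(1-3) False xy(4,5)] xy
      by blast
  qed
qed

end
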